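(* Let $\mathcal{E}=\{e_1,\dots,e_n\}$ be an orthonormal basis for $\mathbb{R}^n$ and let $M$ be a $k$-dimensional $\mathcal{E}$-PR subspace. Then for every nonzero $x\in M$, $|\mathrm{supp}(x)|\ge k$.
   Context: For $x=\sum_{i=1}^n\alpha_ie_i$, $\mathrm{supp}(x)=\{i:\alpha_i\neq0\}$ and $|\cdot|$ denotes cardinality. A subspace $M$ is an $\mathcal{E}$-PR subspace if $\{P_Me_i\}_{i=1}^n$ (with $P_M$ the orthogonal projection onto $M$) spans $M$ and whenever $x,y\in M$ satisfy $|\langle x,P_Me_i\rangle|=|\langle y,P_Me_i\rangle|$ for all $i$, then $x=\pm y$. *)

theory Defs
  imports "HOL-Analysis.Analysis"
begin

definition orth_proj :: "('a::real_inner) set \<Rightarrow> 'a \<Rightarrow> 'a" where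
  "orth_proj M x = (THE y. y \<in> M \<and> (\<forall>m\<in>M. (x - y) \<bullet> m = 0))"

definition orthonormal_family :: "('n::finite \<Rightarrow> real ^ 'n) \<Rightarrow> bool" where
  "orthonormal_family e \<longleftrightarrow> (\<forall>i j. e i \<bullet> e j = (if i = j then 1 else 0))"

definition supp :: "('n::finite \<Rightarrow> real ^ 'n) \<Rightarrow> real ^ 'n \<Rightarrow> 'n set" where
  "supp e x = {i. (THE \<alpha>. x = (\<Sum>j\<in>UNIV. \<alpha> j *\<^sub>R e j)) i \<noteq> 0}"

text \<open>E-PR subspace (phase retrievable with respect to the projected frame).\<close>
definition EPR :: "('n::finite \<Rightarrow> real ^ 'n) \<Rightarrow> (real ^ 'n) set \<Rightarrow> bool" where
  "EPR e M \<longleftrightarrow>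
     span (range (\<lambda>i. orth_proj M (e i))) = M \<and>
     (\<forall>x\<in>M. \<forall>y\<in>M. (\<forall>i. \<bar>x \<bullet> orth_proj M (e i)\<bar> = \<bar>y \<bullet> orth_proj M (e i)\<bar>)
        \<longrightarrow> x = y \<or> x = - y)"

end

theory Submission
  imports Defs
begin

text \<open>If some nonzero x in M had fewer than k = dim M nonzero coordinates, the projections
  P e_i with i in supp x would span a proper subspace of M, so some nonzero y in M is
  orthogonal to all of them, i.e. y e_i = 0 on supp x. Then x and y have disjoint
  supports, hence x + y and x - y have the same measurements |(x \<plusminus> y) P e_i| =
  |(x \<plusminus> y) e_i|, and phase retrievability forces x + y = \<plusminus>(x - y), i.e. x = 0 or y = 0.\<close>

lemma orth_proj_characterization:
  fixes M :: "'a::euclidean_space set"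
  assumes "subspace M"
  shows "orth_proj M v \<in> M \<and> (\<forall>m\<in>M. (v - orth_proj M v) \<bullet> m = 0)"
proof -
  obtain y z where y: "y \<in> span M" and z: "\<And>w. w \<in> span M \<Longrightarrow> orthogonal z w"
    and vyz: "v = y + z"
    using orthogonal_subspace_decomp_exists[of M v] by metis
  have y_proj: "y \<in> M \<and> (\<forall>m\<in>M. (v - y) \<bullet> m = 0)"
    using y z vyz assms by (metis add_diff_cancel_left' orthogonal_def span_eq_iff)
  have "y' = y" if y': "y' \<in> M \<and> (\<forall>m\<in>M. (v - y') \<bullet> m = 0)" for y'
  proof -
    have "y - y' \<in> M" using y_proj y' assms subspace_diff by blast
    then have "(v - y') \<bullet> (y - y') = 0" "(v - y) \<bullet> (y - y') = 0" using y_proj y' by auto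
    then have "(y - y') \<bullet> (y - y') = 0" by (simp add: inner_diff_left inner_diff_right)
    then show ?thesis by simp
  qed
  then have "orth_proj M v = y"
    unfolding orth_proj_def using y_proj by (rule the_equality[rotated])
  then show ?thesis using y_proj by simp
qed

lemma inner_orth_proj:
  fixes M :: "'a::euclidean_space set"
  assumes "subspace M" "m \<in> M"
  shows "m \<bullet> orth_proj M v = m \<bullet> v"
proof -
  have "(v - orth_proj M v) \<bullet> m = 0"
    using orth_proj_characterization[OF assms(1)] assms(2) by blast
  then have "m \<bullet> (v - orth_proj M v) = 0" by (simp add: inner_commute)
  then show ?thesis by (simp add: inner_diff_right)
qed

lemma supp_orthonormal_family:
  fixes e :: "'n::finite \<Rightarrow> real ^ 'n"
  assumes "orthonormal_family e"
  shows "supp e x = {i. x \<bullet> e i \<noteq> 0}"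
proof -
  have ee: "e i \<bullet> e j = (if i = j then 1 else 0)" for i j
    using assms unfolding orthonormal_family_def by blast
  have coefficient: "(\<Sum>j\<in>UNIV. \<alpha> j *\<^sub>R e j) \<bullet> e i = \<alpha> i" for \<alpha> i
    by (simp add: inner_sum_left ee if_distrib cong: if_cong)
  have "independent (range e)"
  proof (rule pairwise_orthogonal_independent)
    show "pairwise orthogonal (range e)"
      unfolding pairwise_def orthogonal_def using ee by auto
    show "0 \<notin> range e" using ee by (metis imageE inner_zero_left zero_neq_one)
  qed
  moreover have "inj e" using ee by (metis inj_def zero_neq_one)
  then have "card (range e) = dim (UNIV :: (real ^ 'n) set)"
    by (simp add: card_image)
  ultimately have spanning: "UNIV \<subseteq> span (range e)"
    using card_eq_dim[of "range e" UNIV] by simp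
  define d where "d = x - (\<Sum>j\<in>UNIV. (x \<bullet> e j) *\<^sub>R e j)"
  have "orthogonal d y" if "y \<in> range e" for y
    using that coefficient unfolding d_def orthogonal_def by (auto simp: inner_diff_left)
  then have "orthogonal d d" using spanning orthogonal_to_span by blast
  then have expansion: "x = (\<Sum>j\<in>UNIV. (x \<bullet> e j) *\<^sub>R e j)"
    unfolding d_def orthogonal_def by simp
  have "(THE \<alpha>. x = (\<Sum>j\<in>UNIV. \<alpha> j *\<^sub>R e j)) = (\<lambda>i. x \<bullet> e i)"
    by (rule the_equality) (use expansion coefficient in auto)
  then show ?thesis unfolding supp_def by simp
qed

lemma subspace_has_nonzero_orthogonal_to_few:
  fixes M :: "'a::euclidean_space set"
  assumes "subspace M" "finite F" "card F < dim M"
  obtains y where "y \<in> M" "y \<noteq> 0" "\<And>v. v \<in> F \<Longrightarrow> y \<bullet> v = 0"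
proof -
  define T where "T = orth_proj M ` F"
  have "T \<subseteq> M" using orth_proj_characterization[OF assms(1)] unfolding T_def by auto
  then have "span T \<subseteq> span M" by (rule span_mono)
  moreover have "dim T \<le> card T"
    using assms(2) unfolding T_def by (intro dim_le_card) (auto intro: span_base)
  then have "dim T < dim M"
    using card_image_le[of F "orth_proj M"] assms(2,3) unfolding T_def by linarith
  ultimately have "span T \<subset> span M"
    using dim_span[of T] dim_span[of M] by (metis order_less_irrefl psubsetI)
  then obtain y where y: "y \<noteq> 0" "y \<in> span M" "\<And>z. z \<in> span T \<Longrightarrow> orthogonal y z"
    using orthogonal_to_subspace_exists_gen by blast
  have "y \<in> M" using y(2) span_eq_iff[of M] assms(1) by blast
  moreover have "y \<bullet> v = 0" if "v \<in> F" for v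
  proof -
    have "orth_proj M v \<in> span T" unfolding T_def using that by (intro span_base imageI)
    then have "y \<bullet> orth_proj M v = 0" using y(3) unfolding orthogonal_def by blast
    then show ?thesis using inner_orth_proj[OF assms(1) \<open>y \<in> M\<close>] by simp
  qed
  ultimately show thesis using that y(1) by blast
qed

lemma EPR_disjoint_supports:
  fixes e :: "'n::finite \<Rightarrow> real ^ 'n"
  assumes "EPR e M" "subspace M" "x \<in> M" "y \<in> M"
    and disjoint: "\<And>i. x \<bullet> e i = 0 \<or> y \<bullet> e i = 0"
  shows "x = 0 \<or> y = 0"
proof -
  have in_M: "x + y \<in> M" "x - y \<in> M"
    using assms(2-4) by (auto intro: subspace_add subspace_diff)
  have "\<bar>(x + y) \<bullet> e i\<bar> = \<bar>(x - y) \<bullet> e i\<bar>" for i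
    using disjoint[of i] by (auto simp: inner_add_left inner_diff_left)
  then have "\<bar>(x + y) \<bullet> orth_proj M (e i)\<bar> = \<bar>(x - y) \<bullet> orth_proj M (e i)\<bar>" for i
    using inner_orth_proj[OF assms(2) in_M(1)] inner_orth_proj[OF assms(2) in_M(2)] by simp
  then have "x + y = x - y \<or> x + y = - (x - y)"
    using assms(1) in_M unfolding EPR_def by blast
  then have "2 *\<^sub>R y = 0 \<or> 2 *\<^sub>R x = 0" by (auto simp: algebra_simps scaleR_2)
  then show ?thesis by auto
qed

theorem proposition4p1:
  fixes e :: "'n::finite \<Rightarrow> real ^ 'n" and M :: "(real ^ 'n) set" and k :: nat
  assumes "orthonormal_family e"
    and "subspace M"
    and "dim M = k"
    and "EPR e M"
  shows "\<forall>x\<in>M. x \<noteq> 0 \<longrightarrow> card (supp e x) \<ge> k"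
proof (intro ballI impI, rule ccontr)
  fix x assume x: "x \<in> M" "x \<noteq> 0" and few: "\<not> k \<le> card (supp e x)"
  define S where "S = {i. x \<bullet> e i \<noteq> 0}"
  have "card S < dim M"
    using few assms(3) unfolding S_def supp_orthonormal_family[OF assms(1)] by linarith
  then have "card (e ` S) < dim M"
    using card_image_le[OF finite[of S], of e] by linarith
  moreover have "finite (e ` S)" by simp
  ultimately obtain y where y: "y \<in> M" "y \<noteq> 0" "\<And>v. v \<in> e ` S \<Longrightarrow> y \<bullet> v = 0"
    using subspace_has_nonzero_orthogonal_to_few[OF assms(2)] by blast
  have "x \<bullet> e i = 0 \<or> y \<bullet> e i = 0" for i
    using y(3)[of "e i"] unfolding S_def by blast
  then have "x = 0 \<or> y = 0"
    by (rule EPR_disjoint_supports[OF assms(4,2) x(1) y(1)])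
  then show False using x(2) y(2) by blast
qed

end
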